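(* Let $0<r<s<\infty$, $\alpha>0$, $\beta>0$, and for $n\ge3$ let $h_*=h_*(n)>0$ be defined by $\frac{2\alpha}{h_*^r}+\frac{2\beta}{h_*^s}=\log n-(\log\log n)^2$. Let $h_n>0$ with $h_n\to0$ satisfy $$b\log h_n+\frac{2\alpha}{h_n^r}+\frac{2\beta}{h_n^s}=\log n+C(1+o(1)),\quad n\to\infty,$$ for some $b\in\mathbb{R}$, $C\in\mathbb{R}$. Then, as $n\to\infty$: $h_*(n)=(\log n/(2\beta))^{-1/s}(1+o(1))$; for every $a\in\mathbb{R}$, $$h_n^a\exp\Big(-\frac{2\alpha}{h_n^r}\Big)=h_*^a\exp\Big(-\frac{2\alpha}{h_*^r}\Big)(1+o(1))\quad\text{and}\quad\frac{h_*^a}{n}\exp\Big(\frac{2\beta}{h_*^s}\Big)=o\Big(\exp\Big(-\frac{2\alpha}{h_*^r}\Big)\Big);$$ and for every $\gamma\in\mathbb{R}$, for $n$ large enough, $$h_*^{s+2\gamma-1}\exp\Big(\frac{2\beta}{h_*^s}\Big)\le h_n^{s+2\gamma-1}\exp\Big(\frac{2\beta}{h_n^s}\Big).$$ *)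

theory Defs
  imports Complex_Main "HOL-Library.Landau_Symbols"
begin

end

(*
  With q = r/s < 1, the variables u = h_n^-s and v = h_*^-s satisfy
    2 beta u + 2 alpha u^q - (b/s) ln u = ln n + O(1)  and  2 beta v + 2 alpha v^q = ln n - (ln ln n)^2,
  so both are asymptotic to ln n / (2 beta). Subtracting the two equations gives
  2 beta (u - v) + 2 alpha (u^q - v^q) ~ (ln ln n)^2. The two differences have the same sign, hence
  |u - v| = O((ln ln n)^2), and concavity of x^q yields |u^q - v^q| <= v^(q-1) |u - v| -> 0;
  consequently u - v -> infinity while ln u - ln v -> 0. These facts give the four claims
  after substituting back; for the o-bound note that exp(2 alpha/h_*^r + 2 beta/h_*^s) = n exp(-(ln ln n)^2).
*)
theory Submission
  imports Defs "HOL-Real_Asymp.Real_Asymp"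
begin

lemma abs_powr_diff_le:
  fixes x y q :: real
  assumes "0 < x" "0 < y" "0 \<le> q" "q \<le> 1"
  shows "\<bar>x powr q - y powr q\<bar> \<le> y powr (q - 1) * \<bar>x - y\<bar>"
proof -
  have ratio: "\<bar>t powr q - 1\<bar> \<le> \<bar>t - 1\<bar>" if "0 < t" for t :: real
  proof (cases "1 \<le> t")
    case True
    then have "1 \<le> t powr q" "t powr q \<le> t"
      using assms powr_mono[of q 1 t] by (auto intro: ge_one_powr_ge_zero)
    then show ?thesis using that by simp
  next
    case False
    then have "t \<le> t powr q" "t powr q \<le> 1"
      using assms that powr_mono'[of q 1 t] by (auto intro: powr_le1)
    then show ?thesis using that by simp
  qed
  have "(x / y) powr q - 1 = (x powr q - y powr q) / y powr q"
    using assms by (simp add: powr_divide field_simps)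
  then have "\<bar>x powr q - y powr q\<bar> = y powr q * \<bar>(x / y) powr q - 1\<bar>"
    using assms by (simp add: abs_divide)
  also have "\<dots> \<le> y powr q * \<bar>x / y - 1\<bar>"
    using ratio[of "x / y"] assms by (simp add: mult_left_mono)
  also have "\<dots> = y powr (q - 1) * \<bar>x - y\<bar>"
    using assms by (simp add: powr_diff abs_divide field_simps)
  finally show ?thesis .
qed

lemma abs_diff_le_abs_add_powr_diff:
  fixes x y q \<alpha> \<beta> :: real
  assumes "0 < x" "0 < y" "0 \<le> q" "0 \<le> \<alpha>" "0 \<le> \<beta>"
  shows "\<beta> * \<bar>x - y\<bar> \<le> \<bar>\<beta> * (x - y) + \<alpha> * (x powr q - y powr q)\<bar>"
proof (cases "y \<le> x")
  case True
  then have "y powr q \<le> x powr q" using assms by (intro powr_mono2) auto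
  then have "0 \<le> \<beta> * (x - y)" "0 \<le> \<alpha> * (x powr q - y powr q)"
    using True assms by simp_all
  then show ?thesis using True by simp
next
  case False
  then have "x powr q \<le> y powr q" using assms by (intro powr_mono2) auto
  then have "\<beta> * (x - y) \<le> 0" "\<alpha> * (x powr q - y powr q) \<le> 0"
    using False assms by (simp_all add: mult_nonneg_nonpos)
  then show ?thesis using False by (simp add: abs_of_nonpos algebra_simps)
qed

lemma asymp_equiv_exp:
  fixes f g :: "'a \<Rightarrow> real"
  assumes "((\<lambda>x. f x - g x) \<longlongrightarrow> 0) F"
  shows "(\<lambda>x. exp (f x)) \<sim>[F] (\<lambda>x. exp (g x))"
proof (rule asymp_equivI')
  have "((\<lambda>x. exp (f x - g x)) \<longlongrightarrow> exp 0) F"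
    by (intro tendsto_intros assms)
  then show "((\<lambda>x. exp (f x) / exp (g x)) \<longlongrightarrow> 1) F"
    by (simp add: exp_diff)
qed

lemma asymp_equiv_powr_mult_exp_powr:
  fixes u v :: "'a \<Rightarrow> real"
  assumes "u \<sim>[F] v" "\<forall>\<^sub>F x in F. 0 \<le> u x" "\<forall>\<^sub>F x in F. 0 \<le> v x"
    and "((\<lambda>x. u x powr q - v x powr q) \<longlongrightarrow> 0) F"
  shows "(\<lambda>x. u x powr p * exp (c * u x powr q)) \<sim>[F] (\<lambda>x. v x powr p * exp (c * v x powr q))"
proof (rule asymp_equiv_mult)
  show "(\<lambda>x. u x powr p) \<sim>[F] (\<lambda>x. v x powr p)"
    using assms(1-3) by (rule asymp_equiv_powr_real)
  have "((\<lambda>x. c * (u x powr q - v x powr q)) \<longlongrightarrow> c * 0) F"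
    by (intro tendsto_intros assms(4))
  then show "(\<lambda>x. exp (c * u x powr q)) \<sim>[F] (\<lambda>x. exp (c * v x powr q))"
    by (intro asymp_equiv_exp) (simp add: right_diff_distrib)
qed

lemma filterlim_at_top_of_powr_add_linear:
  fixes x :: "'a \<Rightarrow> real"
  assumes "0 \<le> q" "q \<le> 1" "0 \<le> a" "0 < \<beta>" "\<forall>\<^sub>F n in F. 0 \<le> x n"
    and "filterlim (\<lambda>n. a * x n powr q + \<beta> * x n) at_top F"
  shows "filterlim x at_top F"
proof (rule filterlim_at_top_mono)
  have "filterlim (\<lambda>n. - a + (a * x n powr q + \<beta> * x n)) at_top F"
    by (rule filterlim_tendsto_add_at_top[OF tendsto_const assms(6)])
  then show "filterlim (\<lambda>n. 1 / (a + \<beta>) * (- a + (a * x n powr q + \<beta> * x n))) at_top F"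
    using assms(3,4) by (intro filterlim_tendsto_pos_mult_at_top[OF tendsto_const]) auto
  show "\<forall>\<^sub>F n in F. 1 / (a + \<beta>) * (- a + (a * x n powr q + \<beta> * x n)) \<le> x n"
    using assms(5)
  proof eventually_elim
    case (elim n)
    have powr_le: "x n powr q \<le> 1 + x n"
    proof (cases "x n \<le> 1")
      case True
      then show ?thesis using elim assms(1) powr_le1[of q "x n"] by simp
    next
      case False
      then show ?thesis using powr_mono[of q 1 "x n"] assms(2) by simp
    qed
    have "a * x n powr q \<le> a + a * x n"
      using mult_left_mono[OF powr_le assms(3)] by (simp add: distrib_left)
    then show ?case using assms(3,4) by (simp add: field_simps)
  qed
qed

lemma asymp_equiv_of_eq_dominant_linear:
  fixes x L g :: "'a \<Rightarrow> real"
  assumes "q < 1" "\<beta> \<noteq> 0" "filterlim x at_top F" "g \<in> o[F](L)"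
    and "\<forall>\<^sub>F n in F. c * ln (x n) + a * x n powr q + \<beta> * x n = L n + g n"
  shows "x \<sim>[F] (\<lambda>n. L n / \<beta>)"
proof -
  have "(\<lambda>t. ln t) \<in> o(\<lambda>t::real. t)" "(\<lambda>t. t powr q) \<in> o(\<lambda>t::real. t)"
    using assms(1) by real_asymp+
  then have "(\<lambda>n. ln (x n)) \<in> o[F](x)" "(\<lambda>n. x n powr q) \<in> o[F](x)"
    by (auto intro: landau_o.small.compose[OF _ assms(3)])
  then have rest: "(\<lambda>n. c * ln (x n) + a * x n powr q) \<in> o[F](\<lambda>n. \<beta> * x n)"
    using assms(2) by (auto intro: sum_in_smallo)
  have "(\<lambda>n. L n + g n) \<sim>[F] (\<lambda>n. \<beta> * x n)"
  proof (rule asymp_equiv_transfer)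
    show "(\<lambda>n. \<beta> * x n + (c * ln (x n) + a * x n powr q)) \<sim>[F] (\<lambda>n. \<beta> * x n)"
      using rest by (subst asymp_equiv_add_right) auto
    show "\<forall>\<^sub>F n in F. \<beta> * x n + (c * ln (x n) + a * x n powr q) = L n + g n"
      using assms(5) by eventually_elim simp
  qed simp
  moreover have "(\<lambda>n. L n + g n) \<sim>[F] L"
    using assms(4) by (subst asymp_equiv_add_right) auto
  ultimately have "(\<lambda>n. \<beta> * x n) \<sim>[F] L"
    by (meson asymp_equiv_sym asymp_equiv_trans)
  then have "(\<lambda>n. \<beta> * x n / \<beta>) \<sim>[F] (\<lambda>n. L n / \<beta>)"
    by (intro asymp_equiv_divide asymp_equiv_refl)
  then show ?thesis using assms(2) by simp
qed

lemma powr_diff_tendsto_0_of_combination: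
  fixes u v :: "'a \<Rightarrow> real"
  assumes "0 \<le> q" "q \<le> 1" "0 \<le> \<alpha>" "0 < \<beta>"
    and "\<forall>\<^sub>F n in F. 0 < u n" "\<forall>\<^sub>F n in F. 0 < v n"
    and "((\<lambda>n. v n powr (q - 1) * (\<beta> * (u n - v n) + \<alpha> * (u n powr q - v n powr q)))
           \<longlongrightarrow> 0) F"
  shows "((\<lambda>n. u n powr q - v n powr q) \<longlongrightarrow> 0) F"
proof (rule tendsto_0_le[OF assms(7), where K = "1 / \<beta>"])
  show "\<forall>\<^sub>F n in F. norm (u n powr q - v n powr q)
      \<le> norm (v n powr (q - 1) * (\<beta> * (u n - v n) + \<alpha> * (u n powr q - v n powr q))) * (1 / \<beta>)"
    using assms(5,6)
  proof eventually_elim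
    case (elim n)
    let ?R = "\<beta> * (u n - v n) + \<alpha> * (u n powr q - v n powr q)"
    have "\<bar>u n powr q - v n powr q\<bar> \<le> v n powr (q - 1) * \<bar>u n - v n\<bar>"
      using elim assms(1,2) by (rule abs_powr_diff_le)
    also have "\<dots> \<le> v n powr (q - 1) * (\<bar>?R\<bar> / \<beta>)"
      using abs_diff_le_abs_add_powr_diff[of "u n" "v n" q \<alpha> \<beta>] elim assms(1,3,4)
      by (intro mult_left_mono) (simp_all add: field_simps)
    finally show ?case by (simp add: abs_mult)
  qed
qed

lemma tendsto_ln_diff_0_of_asymp_equiv:
  fixes f g :: "'a \<Rightarrow> real"
  assumes "f \<sim>[F] g" "\<forall>\<^sub>F x in F. 0 < f x" "\<forall>\<^sub>F x in F. 0 < g x"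
  shows "((\<lambda>x. ln (f x) - ln (g x)) \<longlongrightarrow> 0) F"
proof -
  have "((\<lambda>x. f x / g x) \<longlongrightarrow> 1) F"
    using assms(3) by (intro asymp_equivD_strong[OF assms(1)]) (auto elim: eventually_mono)
  then have "((\<lambda>x. ln (f x / g x)) \<longlongrightarrow> ln 1) F"
    by (intro tendsto_intros) auto
  moreover have "\<forall>\<^sub>F x in F. ln (f x / g x) = ln (f x) - ln (g x)"
    using assms(2,3) by eventually_elim (simp add: ln_div)
  ultimately show ?thesis by (simp add: tendsto_cong)
qed

lemma eventually_ln_add_linear_le:
  fixes u v :: "'a \<Rightarrow> real"
  assumes "0 < \<beta>" "u \<sim>[F] v" "\<forall>\<^sub>F n in F. 0 < u n" "\<forall>\<^sub>F n in F. 0 < v n"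
    and "filterlim (\<lambda>n. u n - v n) at_top F"
  shows "\<forall>\<^sub>F n in F. c * ln (v n) + \<beta> * v n \<le> c * ln (u n) + \<beta> * u n"
proof -
  have "((\<lambda>n. c * (ln (u n) - ln (v n))) \<longlongrightarrow> c * 0) F"
    by (intro tendsto_intros tendsto_ln_diff_0_of_asymp_equiv assms(2-4))
  then have "\<forall>\<^sub>F n in F. - \<beta> < c * (ln (u n) - ln (v n))"
    using assms(1) by (intro order_tendstoD(1)) auto
  moreover have "\<forall>\<^sub>F n in F. 1 \<le> u n - v n"
    using assms(5) by (simp add: filterlim_at_top)
  ultimately show ?thesis
    using assms(3,4)
  proof eventually_elim
    case (elim n)
    then have "\<beta> \<le> \<beta> * (u n - v n)" using assms(1) by simp
    then show ?case using elim by (simp add: algebra_simps)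
  qed
qed

lemma neg_powr_identities:
  fixes x s r a :: real
  assumes "0 < x" "s \<noteq> 0"
  shows "(x powr - s) powr - (a / s) = x powr a" "(x powr - s) powr (r / s) = 1 / x powr r"
    and "ln (x powr - s) = - s * ln x"
  using assms by (simp_all only: powr_powr ln_powr) (simp_all add: powr_minus_divide)

locale bandwidth_asymptotics =
  fixes r s \<alpha> \<beta> b C :: real and hs h e :: "nat \<Rightarrow> real"
  assumes rs: "0 < r" "r < s"
    and \<alpha>\<beta>: "0 < \<alpha>" "0 < \<beta>"
    and hs_eq: "\<forall>n\<ge>3. 0 < hs n \<and>
      2 * \<alpha> / hs n powr r + 2 * \<beta> / hs n powr s = ln (real n) - (ln (ln (real n)))\<^sup>2"
    and h_pos: "\<forall>n. 0 < h n"
    and h_lim: "h \<longlonglongrightarrow> 0"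
    and e_lim: "e \<longlonglongrightarrow> 0"
    and h_eq: "\<forall>\<^sub>F n in sequentially.
      b * ln (h n) + 2 * \<alpha> / h n powr r + 2 * \<beta> / h n powr s = ln (real n) + C * (1 + e n)"
begin

definition u :: "nat \<Rightarrow> real" where "u n = h n powr - s"

definition v :: "nat \<Rightarrow> real" where "v n = hs n powr - s"

lemma s_pos: "0 < s"
  using rs by simp

lemma exponent_bounds: "0 < r / s" "r / s < 1"
  using rs by simp_all

lemma hs_pos: "\<forall>\<^sub>F n in sequentially. 0 < hs n"
  using eventually_ge_at_top[of 3] by eventually_elim (use hs_eq in auto)

lemma u_pos: "0 < u n"
  using h_pos[rule_format, of n] by (simp add: u_def)

lemma v_pos: "\<forall>\<^sub>F n in sequentially. 0 < v n"
  using hs_pos by eventually_elim (simp add: v_def)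

lemma u_eq: "\<forall>\<^sub>F n in sequentially.
  - (b / s) * ln (u n) + 2 * \<alpha> * u n powr (r / s) + 2 * \<beta> * u n = ln (real n) + C * (1 + e n)"
  using h_eq
proof eventually_elim
  case (elim n)
  have "0 < h n" "s \<noteq> 0" using h_pos s_pos by auto
  with elim show ?case
    by (simp add: u_def neg_powr_identities) (simp add: powr_minus_divide)
qed

lemma v_eq: "\<forall>\<^sub>F n in sequentially.
  2 * \<alpha> * v n powr (r / s) + 2 * \<beta> * v n = ln (real n) - (ln (ln (real n)))\<^sup>2"
  using eventually_ge_at_top[of 3]
proof eventually_elim
  case (elim n)
  then have "0 < hs n" "s \<noteq> 0" using hs_eq s_pos by auto
  with elim hs_eq show ?case
    by (simp add: v_def neg_powr_identities) (simp add: powr_minus_divide)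
qed

lemma scale_pos: "\<forall>\<^sub>F n in sequentially. 0 < ln (real n) / (2 * \<beta>)"
  using eventually_gt_at_top[of 1] by eventually_elim (use \<alpha>\<beta> in simp)

lemma u_at_top: "filterlim u at_top sequentially"
proof -
  have "filterlim h (at_right 0) sequentially"
    using h_lim h_pos by (auto intro!: tendsto_imp_filterlim_at_right)
  moreover have "filterlim (\<lambda>x::real. x powr - s) at_top (at_right 0)"
    using s_pos by real_asymp
  ultimately show ?thesis
    unfolding u_def by (rule filterlim_compose[rotated])
qed

lemma v_at_top: "filterlim v at_top sequentially"
proof (rule filterlim_at_top_of_powr_add_linear)
  have "filterlim (\<lambda>n. ln (real n) - (ln (ln (real n)))\<^sup>2) at_top sequentially"
    by real_asymp
  then show "filterlim (\<lambda>n. 2 * \<alpha> * v n powr (r / s) + 2 * \<beta> * v n) at_top sequentially"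
    using filterlim_cong[OF refl refl v_eq] by simp
  show "\<forall>\<^sub>F n in sequentially. 0 \<le> v n"
    using v_pos by eventually_elim simp
qed (use exponent_bounds \<alpha>\<beta> in auto)

lemma u_asymp_equiv: "u \<sim>[sequentially] (\<lambda>n. ln (real n) / (2 * \<beta>))"
proof (rule asymp_equiv_of_eq_dominant_linear[OF exponent_bounds(2) _ u_at_top _ u_eq])
  have "filterlim (\<lambda>n. ln (real n)) at_infinity sequentially"
    by (rule filterlim_at_top_imp_at_infinity) real_asymp
  moreover have "((\<lambda>n. C * (1 + e n)) \<longlongrightarrow> C * (1 + 0)) sequentially"
    by (intro tendsto_intros e_lim)
  ultimately have "((\<lambda>n. C * (1 + e n) / ln (real n)) \<longlongrightarrow> 0) sequentially"
    by (intro tendsto_divide_0)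
  moreover have "\<forall>\<^sub>F n in sequentially. ln (real n) \<noteq> 0"
    using eventually_gt_at_top[of 1] by eventually_elim simp
  ultimately show "(\<lambda>n. C * (1 + e n)) \<in> o(\<lambda>n. ln (real n))"
    by (rule smalloI_tendsto)
qed (use \<alpha>\<beta> in simp)

lemma v_asymp_equiv: "v \<sim>[sequentially] (\<lambda>n. ln (real n) / (2 * \<beta>))"
proof (rule asymp_equiv_of_eq_dominant_linear[OF exponent_bounds(2) _ v_at_top])
  show "(\<lambda>n. - (ln (ln (real n)))\<^sup>2) \<in> o(\<lambda>n. ln (real n))"
    by real_asymp
  show "\<forall>\<^sub>F n in sequentially. 0 * ln (v n) + 2 * \<alpha> * v n powr (r / s) + 2 * \<beta> * v n
      = ln (real n) + - (ln (ln (real n)))\<^sup>2"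
    using v_eq by eventually_elim simp
qed (use \<alpha>\<beta> in simp)

lemma u_asymp_equiv_v: "u \<sim>[sequentially] v"
  using u_asymp_equiv v_asymp_equiv by (meson asymp_equiv_sym asymp_equiv_trans)

lemma remainder_asymp_equiv:
  "(\<lambda>n. 2 * \<beta> * (u n - v n) + 2 * \<alpha> * (u n powr (r / s) - v n powr (r / s)))
     \<sim>[sequentially] (\<lambda>n. (ln (ln (real n)))\<^sup>2)"
proof -
  let ?M = "\<lambda>n. ln (real n) / (2 * \<beta>)"
  have "((\<lambda>n. C * (1 + e n) + b / s * (ln (u n) - ln (?M n))) \<longlongrightarrow> C * (1 + 0) + b / s * 0)
      sequentially"
    using u_pos scale_pos
    by (intro tendsto_intros e_lim tendsto_ln_diff_0_of_asymp_equiv u_asymp_equiv) auto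
  moreover have "filterlim (\<lambda>n. (ln (ln (real n)))\<^sup>2) at_infinity sequentially"
    by (rule filterlim_at_top_imp_at_infinity) real_asymp
  ultimately have "((\<lambda>n. (C * (1 + e n) + b / s * (ln (u n) - ln (?M n))) / (ln (ln (real n)))\<^sup>2)
      \<longlongrightarrow> 0) sequentially"
    by (rule tendsto_divide_0)
  moreover have "\<forall>\<^sub>F n in sequentially. (ln (ln (real n)))\<^sup>2 \<noteq> 0"
  proof -
    have "\<forall>\<^sub>F n in sequentially. (ln (ln (real n)))\<^sup>2 > 0"
      by real_asymp
    then show ?thesis by eventually_elim simp
  qed
  ultimately have "(\<lambda>n. C * (1 + e n) + b / s * (ln (u n) - ln (?M n)))
      \<in> o(\<lambda>n. (ln (ln (real n)))\<^sup>2)"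
    by (rule smalloI_tendsto)
  moreover have "(\<lambda>n. b / s * ln (?M n)) \<in> o(\<lambda>n. (ln (ln (real n)))\<^sup>2)"
    using \<alpha>\<beta> by real_asymp
  ultimately have "(\<lambda>n. C * (1 + e n) + b / s * (ln (u n) - ln (?M n)) + b / s * ln (?M n))
      \<in> o(\<lambda>n. (ln (ln (real n)))\<^sup>2)"
    by (rule sum_in_smallo)
  then have "(\<lambda>n. C * (1 + e n) + b / s * ln (u n)) \<in> o(\<lambda>n. (ln (ln (real n)))\<^sup>2)"
    by (simp add: right_diff_distrib)
  then have "(\<lambda>n. (ln (ln (real n)))\<^sup>2 + (C * (1 + e n) + b / s * ln (u n)))
      \<sim>[sequentially] (\<lambda>n. (ln (ln (real n)))\<^sup>2)"
    by (subst asymp_equiv_add_right) auto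
  moreover have "\<forall>\<^sub>F n in sequentially. (ln (ln (real n)))\<^sup>2 + (C * (1 + e n) + b / s * ln (u n))
      = 2 * \<beta> * (u n - v n) + 2 * \<alpha> * (u n powr (r / s) - v n powr (r / s))"
    using u_eq v_eq by eventually_elim (simp add: algebra_simps)
  ultimately show ?thesis
    by (rule asymp_equiv_transfer) simp
qed

lemma u_powr_minus_v_powr_tendsto_0:
  "((\<lambda>n. u n powr (r / s) - v n powr (r / s)) \<longlongrightarrow> 0) sequentially"
proof (rule powr_diff_tendsto_0_of_combination)
  have "(\<lambda>n. v n powr (r / s - 1)) \<sim>[sequentially] (\<lambda>n. (ln (real n) / (2 * \<beta>)) powr (r / s - 1))"
    using v_pos scale_pos by (intro asymp_equiv_powr_real v_asymp_equiv) (auto elim: eventually_mono)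
  then have "(\<lambda>n. (ln (real n) / (2 * \<beta>)) powr (r / s - 1) * (ln (ln (real n)))\<^sup>2)
      \<sim>[sequentially] (\<lambda>n. v n powr (r / s - 1) *
        (2 * \<beta> * (u n - v n) + 2 * \<alpha> * (u n powr (r / s) - v n powr (r / s))))"
    by (rule asymp_equiv_mult[OF asymp_equiv_symI asymp_equiv_symI[OF remainder_asymp_equiv]])
  moreover have "((\<lambda>n. (ln (real n) / (2 * \<beta>)) powr (r / s - 1) * (ln (ln (real n)))\<^sup>2) \<longlongrightarrow> 0)
      sequentially"
    using exponent_bounds \<alpha>\<beta> by real_asymp
  ultimately show "((\<lambda>n. v n powr (r / s - 1) *
      (2 * \<beta> * (u n - v n) + 2 * \<alpha> * (u n powr (r / s) - v n powr (r / s)))) \<longlongrightarrow> 0) sequentially"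
    by (rule asymp_equiv_tendsto_transfer)
qed (use exponent_bounds \<alpha>\<beta> v_pos u_pos in auto)

lemma u_minus_v_at_top: "filterlim (\<lambda>n. u n - v n) at_top sequentially"
proof -
  let ?W = "\<lambda>n. u n powr (r / s) - v n powr (r / s)"
  let ?R = "\<lambda>n. 2 * \<beta> * (u n - v n) + 2 * \<alpha> * ?W n"
  have "filterlim (\<lambda>n. (ln (ln (real n)))\<^sup>2) at_top sequentially"
    by real_asymp
  then have "filterlim ?R at_top sequentially"
    by (rule asymp_equiv_at_top_transfer[OF asymp_equiv_symI[OF remainder_asymp_equiv]])
  moreover have "((\<lambda>n. - 2 * \<alpha> * ?W n) \<longlongrightarrow> - 2 * \<alpha> * 0) sequentially"
    by (intro tendsto_intros u_powr_minus_v_powr_tendsto_0)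
  ultimately have "filterlim (\<lambda>n. - 2 * \<alpha> * ?W n + ?R n) at_top sequentially"
    by (rule filterlim_tendsto_add_at_top[rotated])
  then have "filterlim (\<lambda>n. 1 / (2 * \<beta>) * (- 2 * \<alpha> * ?W n + ?R n)) at_top sequentially"
    using \<alpha>\<beta> by (intro filterlim_tendsto_pos_mult_at_top[OF tendsto_const]) auto
  moreover have "1 / (2 * \<beta>) * (- 2 * \<alpha> * ?W n + ?R n) = u n - v n" for n
    using \<alpha>\<beta> by (simp add: field_simps)
  ultimately show ?thesis
    by simp
qed

lemma hs_asymp_equiv: "hs \<sim>[sequentially] (\<lambda>n. (ln (real n) / (2 * \<beta>)) powr (- 1 / s))"
proof (rule asymp_equiv_transfer)
  show "(\<lambda>n. v n powr (- 1 / s)) \<sim>[sequentially] (\<lambda>n. (ln (real n) / (2 * \<beta>)) powr (- 1 / s))"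
    using v_pos scale_pos by (intro asymp_equiv_powr_real v_asymp_equiv) (auto elim: eventually_mono)
  show "\<forall>\<^sub>F n in sequentially. v n powr (- 1 / s) = hs n"
    using hs_pos by eventually_elim (use s_pos in \<open>simp add: v_def powr_powr\<close>)
qed simp

lemma h_powr_exp_asymp_equiv:
  "(\<lambda>n. h n powr a * exp (- 2 * \<alpha> / h n powr r))
     \<sim>[sequentially] (\<lambda>n. hs n powr a * exp (- 2 * \<alpha> / hs n powr r))"
proof (rule asymp_equiv_transfer)
  show "(\<lambda>n. u n powr (- a / s) * exp (- 2 * \<alpha> * u n powr (r / s)))
      \<sim>[sequentially] (\<lambda>n. v n powr (- a / s) * exp (- 2 * \<alpha> * v n powr (r / s)))"
    using v_pos
    by (intro asymp_equiv_powr_mult_exp_powr u_asymp_equiv_v u_powr_minus_v_powr_tendsto_0)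
       (auto simp: u_pos less_imp_le elim: eventually_mono)
  show "\<forall>\<^sub>F n in sequentially. u n powr (- a / s) * exp (- 2 * \<alpha> * u n powr (r / s))
      = h n powr a * exp (- 2 * \<alpha> / h n powr r)"
    using h_pos s_pos by (simp add: u_def neg_powr_identities)
  show "\<forall>\<^sub>F n in sequentially. v n powr (- a / s) * exp (- 2 * \<alpha> * v n powr (r / s))
      = hs n powr a * exp (- 2 * \<alpha> / hs n powr r)"
    using hs_pos by eventually_elim (use s_pos in \<open>simp add: v_def neg_powr_identities\<close>)
qed

lemma hs_powr_exp_smallo:
  "(\<lambda>n. hs n powr a / real n * exp (2 * \<beta> / hs n powr s)) \<in> o(\<lambda>n. exp (- 2 * \<alpha> / hs n powr r))"
proof (rule smalloI_tendsto)
  let ?D = "\<lambda>n. exp (- (ln (ln (real n)))\<^sup>2)"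
  have "(\<lambda>n. hs n powr a * ?D n)
      \<sim>[sequentially] (\<lambda>n. ((ln (real n) / (2 * \<beta>)) powr (- 1 / s)) powr a * ?D n)"
    using hs_pos scale_pos
    by (intro asymp_equiv_mult asymp_equiv_powr_real hs_asymp_equiv asymp_equiv_refl)
       (auto elim: eventually_mono)
  moreover have "((\<lambda>n. ((ln (real n) / (2 * \<beta>)) powr (- 1 / s)) powr a * ?D n) \<longlongrightarrow> 0) sequentially"
    using \<alpha>\<beta> s_pos by real_asymp
  ultimately have "((\<lambda>n. hs n powr a * ?D n) \<longlongrightarrow> 0) sequentially"
    by (rule asymp_equiv_tendsto_transfer[OF asymp_equiv_symI])
  moreover have "\<forall>\<^sub>F n in sequentially. hs n powr a * ?D n
      = hs n powr a / real n * exp (2 * \<beta> / hs n powr s) / exp (- 2 * \<alpha> / hs n powr r)"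
    using eventually_ge_at_top[of 3]
  proof eventually_elim
    case (elim n)
    then have "2 * \<beta> / hs n powr s + 2 * \<alpha> / hs n powr r = ln (real n) - (ln (ln (real n)))\<^sup>2"
      using hs_eq by auto
    then have "exp (2 * \<beta> / hs n powr s) / exp (- 2 * \<alpha> / hs n powr r)
        = exp (ln (real n) - (ln (ln (real n)))\<^sup>2)"
      by (simp flip: exp_add exp_diff)
    also have "\<dots> = real n * ?D n"
      using elim by (simp add: exp_diff exp_minus field_simps)
    finally show ?case
      using elim by (simp add: field_simps)
  qed
  ultimately show "((\<lambda>n. hs n powr a / real n * exp (2 * \<beta> / hs n powr s)
      / exp (- 2 * \<alpha> / hs n powr r)) \<longlongrightarrow> 0) sequentially"
    by (rule Lim_transform_eventually)
qed simp

lemma hs_powr_exp_le_h_powr_exp: "\<forall>\<^sub>F n in sequentially.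
  hs n powr p * exp (2 * \<beta> / hs n powr s) \<le> h n powr p * exp (2 * \<beta> / h n powr s)"
proof -
  have "\<forall>\<^sub>F n in sequentially.
      - (p / s) * ln (v n) + 2 * \<beta> * v n \<le> - (p / s) * ln (u n) + 2 * \<beta> * u n"
    using u_pos v_pos \<alpha>\<beta> by (intro eventually_ln_add_linear_le u_asymp_equiv_v u_minus_v_at_top) auto
  then have "\<forall>\<^sub>F n in sequentially.
      p * ln (hs n) + 2 * \<beta> / hs n powr s \<le> p * ln (h n) + 2 * \<beta> / h n powr s"
    using hs_pos
  proof eventually_elim
    case (elim n)
    then show ?case
      using h_pos[rule_format, of n] s_pos
      by (simp add: u_def v_def neg_powr_identities) (simp add: powr_minus_divide)
  qed
  then show ?thesis
    using hs_pos
  proof eventually_elim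
    case (elim n)
    then show ?case
      using h_pos[rule_format, of n] by (simp add: powr_def[of _ p] flip: exp_add)
  qed
qed

end

theorem lemma8:
  fixes r s \<alpha> \<beta> b C :: real
    and hs h e :: "nat \<Rightarrow> real"
  assumes rs: "0 < r" "r < s"
    and ab: "\<alpha> > 0" "\<beta> > 0"
    and hs_def: "\<forall>n\<ge>3. hs n > 0 \<and>
        2 * \<alpha> / hs n powr r + 2 * \<beta> / hs n powr s = ln (real n) - (ln (ln (real n)))^2"
    and h_pos: "\<forall>n. h n > 0"
    and h_lim: "h \<longlonglongrightarrow> 0"
    and e_lim: "e \<longlonglongrightarrow> 0"
    and h_eq: "\<forall>\<^sub>F n in sequentially.
        b * ln (h n) + 2 * \<alpha> / h n powr r + 2 * \<beta> / h n powr s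
          = ln (real n) + C * (1 + e n)"
  shows "(hs \<sim>[sequentially] (\<lambda>n. (ln (real n) / (2 * \<beta>)) powr (- 1 / s))) \<and>
    (\<forall>a::real. (\<lambda>n. h n powr a * exp (- 2 * \<alpha> / h n powr r))
           \<sim>[sequentially] (\<lambda>n. hs n powr a * exp (- 2 * \<alpha> / hs n powr r))) \<and>
    (\<forall>a::real. (\<lambda>n. hs n powr a / real n * exp (2 * \<beta> / hs n powr s))
           \<in> o(\<lambda>n. exp (- 2 * \<alpha> / hs n powr r))) \<and>
    (\<forall>\<gamma>::real. \<forall>\<^sub>F n in sequentially.
           hs n powr (s + 2 * \<gamma> - 1) * exp (2 * \<beta> / hs n powr s)
             \<le> h n powr (s + 2 * \<gamma> - 1) * exp (2 * \<beta> / h n powr s))"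
proof -
  interpret bandwidth_asymptotics r s \<alpha> \<beta> b C hs h e
    using assms by unfold_locales
  show ?thesis
    using hs_asymp_equiv h_powr_exp_asymp_equiv hs_powr_exp_smallo hs_powr_exp_le_h_powr_exp
    by blast
qed

end
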